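(* Let $X$ be a separable real Banach space, $a\in\mathbb{R}$, and $\varphi:X\to[a,\infty)$ a continuous convex function which is not constant on any line (i.e. there are no $x,v\in X$ with $v\ne0$ such that $t\mapsto\varphi(x+tv)$ is constant on $\mathbb{R}$). Then $\varphi$ is essentially directionally coercive: there exists $\xi\in X^*$ such that $\lim_{t\to\infty}\big(\varphi(x+tv)-\langle\xi,x+tv\rangle\big)=\infty$ for every $x\in X$ and every $v\in X\setminus\{0\}$. *)

theory Defs
  imports "HOL-Analysis.Analysis"
begin

end

theory Submission
  imports Defs
begin

text \<open>
  A continuous convex function has a bounded linear subgradient at every point: by Zorn's lemma
  there is a maximal linear subspace of \<open>X \<times> \<real>\<close> lying below the graph of \<open>\<phi> (y + \<cdot>) - \<phi> y\<close>,
  and maximality forces it to be the graph of a linear functional (the Hahn--Banach argument).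
  Take subgradients \<open>F\<^sub>n\<close> at the points \<open>e\<^sub>n\<close> of a dense sequence and put
  \<open>\<xi> = \<Sum>\<^sub>n w\<^sub>n F\<^sub>n\<close> with positive weights of total mass less than 1.

  On a line \<open>x + t v\<close> the convex function \<open>\<phi> - \<xi>\<close> either tends to \<open>\<infinity>\<close> or is nonincreasing.
  In the second case \<open>\<phi>\<close> grows at most with slope \<open>\<xi> v\<close> along the ray, so \<open>F\<^sub>n v \<le> \<xi> v\<close> for
  all \<open>n\<close>, while \<open>\<xi> v \<ge> 0\<close> because \<open>\<phi>\<close> is bounded below; as \<open>\<xi> v\<close> is a weighted mean of the
  \<open>F\<^sub>n v\<close> with mass less than 1, all \<open>F\<^sub>n v\<close> vanish. Then \<open>\<phi> (e\<^sub>n) \<le> \<phi> (e\<^sub>n + s v)\<close> for all \<open>n\<close>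
  and \<open>s\<close>, hence \<open>\<phi> y \<le> \<phi> (y + s v)\<close> everywhere by continuity, and \<open>\<phi>\<close> is constant on the line.
\<close>

definition hypograph :: "('a \<Rightarrow> real) \<Rightarrow> ('a \<times> real) set" where
  "hypograph q = {(x, r). r \<le> q x}"

lemma subspace_Union_chain:
  fixes \<C> :: "'a::real_vector set set"
  assumes "\<C> \<noteq> {}" "\<And>S. S \<in> \<C> \<Longrightarrow> subspace S" "chain\<^sub>\<subseteq> \<C>"
  shows "subspace (\<Union>\<C>)"
proof (rule subspaceI)
  show "0 \<in> \<Union>\<C>" using assms(1,2) subspace_0 by blast
next
  fix x y assume "x \<in> \<Union>\<C>" "y \<in> \<Union>\<C>"
  then obtain S T where "S \<in> \<C>" "T \<in> \<C>" "x \<in> S" "y \<in> T" by blast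
  with assms(3) obtain U where "U \<in> \<C>" "x \<in> U" "y \<in> U"
    unfolding chain_subset_def by blast
  then show "x + y \<in> \<Union>\<C>" using assms(2) subspace_add by blast
next
  fix c x assume "x \<in> \<Union>\<C>"
  then show "c *\<^sub>R x \<in> \<Union>\<C>" using assms(2) subspace_scale by blast
qed

lemma hypograph_subspace_slope_le:
  fixes q :: "'a::real_vector \<Rightarrow> real"
  assumes q: "convex_on UNIV q" and M: "subspace M" "M \<subseteq> hypograph q"
    and xr: "(x, r) \<in> M" and yr': "(y, r') \<in> M" and s: "s > 0" and t: "t > 0"
  shows "(r - q (x - s *\<^sub>R z)) / s \<le> (q (y + t *\<^sub>R z) - r') / t"
proof -
  define b where "b = s / (s + t)"
  have b: "0 \<le> b" "b \<le> 1" "1 - b = t / (s + t)" using s t by (auto simp: b_def field_simps)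
  have "((1 - b) *\<^sub>R x + b *\<^sub>R y, (1 - b) * r + b * r') \<in> M"
    using subspace_add[OF M(1) subspace_scale[OF M(1) xr] subspace_scale[OF M(1) yr']] by simp
  then have "(1 - b) * r + b * r' \<le> q ((1 - b) *\<^sub>R x + b *\<^sub>R y)"
    using M(2) by (auto simp: hypograph_def)
  also have "(1 - b) *\<^sub>R x + b *\<^sub>R y = (1 - b) *\<^sub>R (x - s *\<^sub>R z) + b *\<^sub>R (y + t *\<^sub>R z)"
    using s t by (simp add: b algebra_simps) (simp add: b_def field_simps)
  also have "q \<dots> \<le> (1 - b) * q (x - s *\<^sub>R z) + b * q (y + t *\<^sub>R z)"
    using convex_onD[OF q b(1,2)] by simp
  finally have "(t * r + s * r') / (s + t) \<le> (t * q (x - s *\<^sub>R z) + s * q (y + t *\<^sub>R z)) / (s + t)"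
    unfolding b(3) by (simp add: b_def add_divide_distrib)
  then have "t * r + s * r' \<le> t * q (x - s *\<^sub>R z) + s * q (y + t *\<^sub>R z)"
    using s t by (simp add: divide_le_cancel)
  then show ?thesis using s t by (simp add: field_simps)
qed

lemma hypograph_subspace_extend:
  fixes q :: "'a::real_vector \<Rightarrow> real"
  assumes q: "convex_on UNIV q" and M: "subspace M" "M \<subseteq> hypograph q"
  obtains c where "span (insert (z, c) M) \<subseteq> hypograph q"
proof -
  define L where "L = {(r - q (x - s *\<^sub>R z)) / s | x r s. (x, r) \<in> M \<and> s > 0}"
  define U where "U = {(q (y + t *\<^sub>R z) - r') / t | y r' t. (y, r') \<in> M \<and> t > 0}"
  have memL: "(r - q (x - s *\<^sub>R z)) / s \<in> L" if "(x, r) \<in> M" "s > 0" for x r s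
    using that unfolding L_def by blast
  have memU: "(q (y + t *\<^sub>R z) - r') / t \<in> U" if "(y, r') \<in> M" "t > 0" for y r' t
    using that unfolding U_def by blast
  have LU: "l \<le> u" if "l \<in> L" "u \<in> U" for l u
    using that hypograph_subspace_slope_le[OF q M] unfolding L_def U_def by blast
  have M0: "(0, 0) \<in> M" using subspace_0[OF M(1)] by (simp add: zero_prod_def)
  have "L \<noteq> {}" using memL[OF M0, of 1] by auto
  have "bdd_above L" using LU memU[OF M0, of 1] by (auto simp: bdd_above_def)
  define c where "c = Sup L"
  have cL: "l \<le> c" if "l \<in> L" for l using cSup_upper[OF that \<open>bdd_above L\<close>] by (simp add: c_def)
  have cU: "c \<le> u" if "u \<in> U" for u using cSup_least[OF \<open>L \<noteq> {}\<close>] LU that by (simp add: c_def)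
  have "span (insert (z, c) M) \<subseteq> hypograph q"
  proof (clarsimp simp: span_insert hypograph_def span_eq_iff[THEN iffD2, OF M(1)])
    fix y s k assume "(y - k *\<^sub>R z, s - k * c) \<in> M"
    then obtain x r where xr: "(x, r) \<in> M" and y: "y = x + k *\<^sub>R z" and s: "s = r + k * c"
      by (metis add_diff_cancel diff_add_cancel)
    consider "k > 0" | "k = 0" | "k < 0" by linarith
    then show "s \<le> q y"
    proof cases
      case 1
      then have "c \<le> (q (x + k *\<^sub>R z) - r) / k" by (intro cU memU[OF xr])
      with 1 show ?thesis by (simp add: y s field_simps)
    next
      case 2
      then show ?thesis using xr M(2) by (auto simp: y s hypograph_def)
    next
      case 3
      then have "(r - q (x - (- k) *\<^sub>R z)) / (- k) \<le> c" by (intro cL memL[OF xr]) simp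
      with 3 show ?thesis by (simp add: y s field_simps)
    qed
  qed
  then show thesis by (rule that)
qed

lemma convex_on_linear_minorant:
  fixes q :: "'a::real_vector \<Rightarrow> real"
  assumes q: "convex_on UNIV q" and q0: "q 0 \<ge> 0"
  obtains f where "linear f" "\<And>x. f x \<le> q x"
proof -
  define \<G> where "\<G> = {G. subspace G \<and> G \<subseteq> hypograph q}"
  have "\<exists>M\<in>\<G>. \<forall>G\<in>\<G>. M \<subseteq> G \<longrightarrow> G = M"
  proof (rule Zorn_Lemma2, intro ballI)
    fix \<C> assume \<C>: "\<C> \<in> chains \<G>"
    show "\<exists>U\<in>\<G>. \<forall>G\<in>\<C>. G \<subseteq> U"
    proof (cases "\<C> = {}")
      case True
      have "{0} \<in> \<G>" using q0 by (simp add: \<G>_def) (simp add: hypograph_def zero_prod_def)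
      with True show ?thesis by blast
    next
      case False
      with \<C> have "\<Union>\<C> \<in> \<G>"
        by (auto simp: \<G>_def chains_def intro!: subspace_Union_chain)
      then show ?thesis by blast
    qed
  qed
  then obtain M where "M \<in> \<G>" and max: "\<And>G. G \<in> \<G> \<Longrightarrow> M \<subseteq> G \<Longrightarrow> G = M"
    by blast
  then have M: "subspace M" "M \<subseteq> hypograph q" by (simp_all add: \<G>_def)
  have total: "\<exists>r. (z, r) \<in> M" for z
  proof -
    obtain c where c: "span (insert (z, c) M) \<subseteq> hypograph q"
      using hypograph_subspace_extend[OF q M] .
    have "span (insert (z, c) M) = M"
      using max[of "span (insert (z, c) M)"] subspace_span c span_mono[of M "insert (z, c) M"]
      by (auto simp: \<G>_def span_eq_iff[THEN iffD2, OF M(1)])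
    then show ?thesis using span_base[of "(z, c)"] by blast
  qed
  have unique: "r = s" if "(z, r) \<in> M" "(z, s) \<in> M" for z r s
  proof (rule ccontr)
    assume "r \<noteq> s"
    have "(0, r - s) \<in> M" using subspace_diff[OF M(1) that] by simp
    then have "((q 0 + 1) / (r - s)) *\<^sub>R (0, r - s) \<in> M" by (rule subspace_scale[OF M(1)])
    then have "(0, q 0 + 1) \<in> M" using \<open>r \<noteq> s\<close> by simp
    then have "q 0 + 1 \<le> q 0" using M(2) by (auto simp: hypograph_def)
    then show False by simp
  qed
  define f where "f z = (THE r. (z, r) \<in> M)" for z
  have graph: "(z, f z) \<in> M" for z
    using total[of z] unique unfolding f_def by (metis theI)
  have "linear f"
  proof (rule linearI)
    fix x y show "f (x + y) = f x + f y"
      using subspace_add[OF M(1) graph graph] by (intro unique[OF graph]) simp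
  next
    fix c x show "f (c *\<^sub>R x) = c *\<^sub>R f x"
      using subspace_scale[OF M(1) graph] by (intro unique[OF graph]) simp
  qed
  moreover have "f x \<le> q x" for x using graph M(2) by (auto simp: hypograph_def)
  ultimately show thesis by (rule that)
qed

lemma convex_on_compose_affine:
  fixes \<phi> :: "'a::real_vector \<Rightarrow> real" and g :: "'b::real_vector \<Rightarrow> 'a"
  assumes "convex_on UNIV \<phi>" "linear g"
  shows "convex_on UNIV (\<lambda>x. \<phi> (a + g x))"
proof (rule convex_onI)
  fix t :: real and x y :: 'b assume "0 < t" "t < 1"
  have "a + g ((1 - t) *\<^sub>R x + t *\<^sub>R y) = (1 - t) *\<^sub>R (a + g x) + t *\<^sub>R (a + g y)"
    unfolding linear_add[OF assms(2)] linear_scale[OF assms(2)] by (simp add: algebra_simps)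
  then show "\<phi> (a + g ((1 - t) *\<^sub>R x + t *\<^sub>R y)) \<le> (1 - t) * \<phi> (a + g x) + t * \<phi> (a + g y)"
    using convex_onD[OF assms(1), of t] \<open>0 < t\<close> \<open>t < 1\<close> by simp
qed simp

lemma convex_on_diff_linear:
  fixes \<phi> :: "'a::real_vector \<Rightarrow> real"
  assumes "convex_on S \<phi>" "linear \<xi>"
  shows "convex_on S (\<lambda>x. \<phi> x - \<xi> x)"
  using assms unfolding convex_on_def
  by (simp add: linear_add[OF assms(2)] linear_scale[OF assms(2)] algebra_simps)

definition subgradient :: "('a::real_vector \<Rightarrow> real) \<Rightarrow> 'a \<Rightarrow> ('a \<Rightarrow> real) \<Rightarrow> bool" where
  "subgradient \<phi> y f \<longleftrightarrow> (\<forall>z. \<phi> y + f z \<le> \<phi> (y + z))"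

lemma convex_on_bounded_subgradient:
  fixes \<phi> :: "'a::real_normed_vector \<Rightarrow> real"
  assumes cvx: "convex_on UNIV \<phi>" and cont: "isCont \<phi> y"
  obtains f where "bounded_linear f" "subgradient \<phi> y f"
proof -
  define q where "q z = \<phi> (y + z) - \<phi> y" for z
  have "convex_on UNIV q"
    unfolding q_def using convex_on_compose_affine[OF cvx linear_id, of y]
    by (intro convex_on_diff) (simp_all add: id_def concave_on_const)
  moreover have "q 0 \<ge> 0" by (simp add: q_def)
  ultimately obtain f where f: "linear f" "\<And>z. f z \<le> q z"
    using convex_on_linear_minorant by blast
  obtain \<delta> where \<delta>: "\<delta> > 0" "\<And>z. z \<noteq> 0 \<Longrightarrow> norm z < \<delta> \<Longrightarrow> norm (q z) < 1"
    using LIM_D[OF cont[unfolded isCont_iff], of 1] unfolding q_def by force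
  have small: "f w < 1" if "w \<noteq> 0" "norm w < \<delta>" for w
    using f(2)[of w] \<delta>(2)[OF that] by simp
  have "norm (f z) \<le> norm z * (2 / \<delta>)" for z
  proof (cases "z = 0")
    case True
    then show ?thesis using linear_0[OF f(1)] by simp
  next
    case False
    define k where "k = \<delta> / (2 * norm z)"
    have k: "k > 0" "norm (k *\<^sub>R z) < \<delta>" "norm ((- k) *\<^sub>R z) < \<delta>"
      using False \<delta>(1) by (simp_all add: k_def)
    have "f (k *\<^sub>R z) < 1" "f ((- k) *\<^sub>R z) < 1"
      using small k False by simp_all
    then have "\<bar>f z\<bar> \<le> 1 / k"
      using k(1) by (simp add: linear_scale[OF f(1)] linear_neg[OF f(1)] field_simps abs_le_iff)
    also have "1 / k = norm z * (2 / \<delta>)" using False \<delta>(1) by (simp add: k_def)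
    finally show ?thesis by simp
  qed
  then have "bounded_linear f"
    using f(1) by (intro bounded_linear_intro[where K = "2 / \<delta>"]) (simp_all add: linear_add linear_scale)
  moreover have "subgradient \<phi> y f" using f(2) by (simp add: subgradient_def q_def algebra_simps)
  ultimately show thesis by (rule that)
qed

lemma subgradient_le_slope:
  fixes \<phi> :: "'a::real_vector \<Rightarrow> real"
  assumes cvx: "convex_on UNIV \<phi>" and f: "linear f" "subgradient \<phi> y f"
    and ray: "\<And>t. t \<ge> 0 \<Longrightarrow> \<phi> (x + t *\<^sub>R v) \<le> A + c * t"
  shows "f v \<le> c"
proof (rule ccontr)
  assume "\<not> f v \<le> c"
  define K where "K = \<phi> (2 *\<^sub>R y - x) / 2 + A / 2 - \<phi> y"
  have bounded: "s * (f v - c) \<le> K" if "s > 0" for s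
  proof -
    have "\<phi> y + s * f v = \<phi> y + f (s *\<^sub>R v)" using f(1) by (simp add: linear_scale)
    also have "\<dots> \<le> \<phi> (y + s *\<^sub>R v)" using f(2) by (simp add: subgradient_def)
    also have "y + s *\<^sub>R v = (1 - 1/2) *\<^sub>R (2 *\<^sub>R y - x) + (1/2) *\<^sub>R (x + (2 * s) *\<^sub>R v)"
      by (simp add: algebra_simps)
    also have "\<phi> \<dots> \<le> (1 - 1/2) * \<phi> (2 *\<^sub>R y - x) + (1/2) * \<phi> (x + (2 * s) *\<^sub>R v)"
      using convex_onD[OF cvx, of "1/2"] by simp
    also have "\<dots> \<le> (1 - 1/2) * \<phi> (2 *\<^sub>R y - x) + (1/2) * (A + c * (2 * s))"
      using ray[of "2 * s"] that by simp
    finally show ?thesis by (simp add: K_def algebra_simps)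
  qed
  define s where "s = (\<bar>K\<bar> + 1) / (f v - c)"
  have "s > 0" "s * (f v - c) = \<bar>K\<bar> + 1"
    using \<open>\<not> f v \<le> c\<close> by (simp_all add: s_def add_pos_nonneg)
  then show False using bounded[of s] by linarith
qed

lemma convex_on_increase_imp_filterlim_at_top:
  fixes g :: "real \<Rightarrow> real"
  assumes g: "convex_on UNIV g" and st: "s < t" "g s < g t"
  shows "filterlim g at_top at_top"
proof -
  define \<delta> where "\<delta> = (g t - g s) / (t - s)"
  have "\<delta> > 0" using st by (simp add: \<delta>_def)
  have lower: "g s + (u - s) * \<delta> \<le> g u" if "t < u" for u
  proof -
    have "(g s - g t) / (s - t) \<le> (g s - g u) / (s - u)"
      using convex_on_slope_le(1)[OF g _ _ st(1) that] by simp
    then show ?thesis using st(1) that by (simp add: \<delta>_def field_simps)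
  qed
  have "eventually (\<lambda>u. g s + (u - s) * \<delta> \<le> g u) at_top"
    by (rule eventually_mono[OF eventually_gt_at_top lower])
  moreover have "filterlim (\<lambda>u. g s + (u - s) * \<delta>) at_top at_top"
    using filterlim_tendsto_add_at_top[OF tendsto_const[of "- s"] filterlim_ident] \<open>\<delta> > 0\<close>
    by (intro filterlim_tendsto_add_at_top[OF tendsto_const]
        filterlim_at_top_mult_tendsto_pos[OF tendsto_const]) simp_all
  ultimately show ?thesis by (rule filterlim_at_top_mono[rotated])
qed

lemma bounded_linear_weighted_suminf:
  fixes F :: "nat \<Rightarrow> 'a::real_normed_vector \<Rightarrow> real"
  assumes F: "\<And>n. bounded_linear (F n)"
  obtains w \<xi> where "\<And>n. w n > 0" "summable w" "suminf w < 1" "bounded_linear \<xi>"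
    "\<And>x. (\<lambda>n. w n * F n x) sums \<xi> x"
proof -
  define B where "B n = Blinfun (F n)" for n
  define w where "w n = (1/2) ^ n / (4 * (norm (B n) + 1))" for n
  have w_pos: "w n > 0" for n by (simp add: w_def add_nonneg_pos)
  have geometric: "summable (\<lambda>n. (1/2::real) ^ n / 4)" "(\<Sum>n. (1/2::real) ^ n / 4) = 1/2"
    using summable_divide[OF summable_geometric, of "1/2::real" 4] suminf_divide[OF summable_geometric, of "1/2::real" 4]
    by (simp_all add: suminf_geometric)
  have w_le: "w n \<le> (1/2) ^ n / 4" for n
    unfolding w_def by (rule divide_left_mono) (auto simp: add_nonneg_pos)
  have weighted_le: "norm (w n *\<^sub>R B n) \<le> (1/2) ^ n / 4" for n
    using w_pos[of n] by (simp add: w_def field_simps)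
  have "summable w"
    using w_pos w_le by (intro summable_comparison_test'[OF geometric(1)]) (auto simp: less_imp_le)
  moreover have "suminf w < 1"
    using suminf_le[OF w_le \<open>summable w\<close> geometric(1)] geometric(2) by simp
  moreover have "summable (\<lambda>n. w n *\<^sub>R B n)"
    using weighted_le by (intro summable_comparison_test'[OF geometric(1)]) auto
  then have "(\<lambda>n. w n * F n x) sums blinfun_apply (\<Sum>n. w n *\<^sub>R B n) x" for x
    using bounded_linear.sums[OF blinfun.bounded_linear_left summable_sums, of "\<lambda>n. w n *\<^sub>R B n" x]
    by (simp add: B_def blinfun.scaleR_left bounded_linear_Blinfun_apply[OF F])
  ultimately show thesis
    using that[of w, OF w_pos _ _ blinfun.bounded_linear_right] by blast
qed

lemma sums_weighted_bounded_eq_zero: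
  fixes a w :: "nat \<Rightarrow> real"
  assumes le: "\<And>n. a n \<le> c" and "c \<ge> 0" and sums: "(\<lambda>n. w n * a n) sums c"
    and w: "\<And>n. w n > 0" "summable w" "suminf w < 1"
  shows "a n = 0"
proof -
  have "c = (\<Sum>n. w n * a n)" using sums by (simp add: sums_iff)
  also have "\<dots> \<le> (\<Sum>n. w n * c)"
    using le w(1) sums_summable[OF sums] summable_mult2[OF w(2)]
    by (intro suminf_le) (auto intro: mult_left_mono less_imp_le)
  also have "\<dots> = suminf w * c" by (rule suminf_mult2[OF w(2), symmetric])
  finally have "(1 - suminf w) * c \<le> 0" by (simp add: algebra_simps)
  then have "c = 0" using \<open>c \<ge> 0\<close> w(3) by (simp add: mult_le_0_iff)
  then have "(\<lambda>n. - (w n * a n)) sums 0" using sums_minus[OF sums] by simp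
  then have "\<forall>n. - (w n * a n) = 0"
    using le w(1) \<open>c = 0\<close> suminf_eq_zero_iff[of "\<lambda>n. - (w n * a n)"]
    by (simp add: sums_iff mult_le_0_iff less_imp_le)
  then have "w n * a n = 0" by simp
  then show ?thesis using w(1)[of n] by simp
qed

lemma constant_along_if_dense_subgradients_vanish:
  fixes \<phi> :: "'a::real_normed_vector \<Rightarrow> real"
  assumes cont: "continuous_on UNIV \<phi>" and dense: "closure (range e) = UNIV"
    and F: "\<And>n. linear (F n)" "\<And>n. subgradient \<phi> (e n) (F n)" "\<And>n. F n v = 0"
  shows "\<phi> (x + t *\<^sub>R v) = \<phi> x"
proof -
  have invariant: "\<phi> y \<le> \<phi> (y + s *\<^sub>R v)" for y s
  proof -
    have "\<phi> (e n) \<le> \<phi> (e n + s *\<^sub>R v)" for n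
      using F(2)[of n, unfolded subgradient_def, rule_format, of "s *\<^sub>R v"] F(3)[of n]
      by (simp add: linear_scale[OF F(1)])
    then have "range e \<subseteq> {y. \<phi> y \<le> \<phi> (y + s *\<^sub>R v)}" by auto
    moreover have "continuous_on UNIV (\<lambda>y. \<phi> (y + s *\<^sub>R v))"
      by (rule continuous_on_compose2[OF cont continuous_on_add[OF continuous_on_id continuous_on_const]]) simp
    then have "closed {y. \<phi> y \<le> \<phi> (y + s *\<^sub>R v)}" by (rule closed_Collect_le[OF cont])
    ultimately have "closure (range e) \<subseteq> {y. \<phi> y \<le> \<phi> (y + s *\<^sub>R v)}" by (rule closure_minimal)
    then show ?thesis using dense by auto
  qed
  show ?thesis using invariant[of x t] invariant[of "x + t *\<^sub>R v" "- t"] by simp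
qed

lemma coercive_along_line_of_dense_subgradients:
  fixes \<phi> :: "'a::real_normed_vector \<Rightarrow> real"
  assumes cvx: "convex_on UNIV \<phi>" and cont: "continuous_on UNIV \<phi>" and lower: "\<And>y. \<phi> y \<ge> a"
    and nonconst: "\<nexists>c. \<forall>t. \<phi> (x + t *\<^sub>R v) = c"
    and dense: "closure (range e) = UNIV"
    and F: "\<And>n. bounded_linear (F n)" "\<And>n. subgradient \<phi> (e n) (F n)"
    and w: "\<And>n. w n > 0" "summable w" "suminf w < 1"
    and \<xi>: "bounded_linear \<xi>" "\<And>y. (\<lambda>n. w n * F n y) sums \<xi> y"
  shows "filterlim (\<lambda>t. \<phi> (x + t *\<^sub>R v) - \<xi> (x + t *\<^sub>R v)) at_top at_top"
proof (rule ccontr)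
  assume not_coercive: "\<not> ?thesis"
  define h where "h t = \<phi> (x + t *\<^sub>R v) - \<xi> (x + t *\<^sub>R v)" for t
  have "convex_on UNIV h"
    unfolding h_def using convex_on_diff_linear[OF cvx bounded_linear.linear[OF \<xi>(1)]]
    by (rule convex_on_compose_affine[OF _ bounded_linear.linear[OF bounded_linear_scaleR_left], of _ x, simplified])
  then have "\<not> h 0 < h t" if "t > 0" for t
    using convex_on_increase_imp_filterlim_at_top[of h 0 t] not_coercive that by (auto simp: h_def[abs_def])
  then have "h t \<le> h 0" if "t \<ge> 0" for t
    using that by (cases "t = 0") (auto simp: not_less)
  then have ray: "\<phi> (x + t *\<^sub>R v) \<le> \<phi> x + \<xi> v * t" if "t \<ge> 0" for t
    using that by (simp add: h_def linear_add linear_scale bounded_linear.linear[OF \<xi>(1)] algebra_simps)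
  have "\<xi> v \<ge> 0"
  proof (rule ccontr)
    assume "\<not> \<xi> v \<ge> 0"
    define t where "t = (\<phi> x - a + 1) / - \<xi> v"
    have "t \<ge> 0" "\<xi> v * t = a - 1 - \<phi> x"
      using \<open>\<not> \<xi> v \<ge> 0\<close> lower[of x] by (simp_all add: t_def divide_nonneg_neg)
    then show False using ray[of t] lower[of "x + t *\<^sub>R v"] by simp
  qed
  have "F n v = 0" for n
  proof (rule sums_weighted_bounded_eq_zero[OF _ \<open>\<xi> v \<ge> 0\<close> \<xi>(2) w])
    show "F m v \<le> \<xi> v" for m
      using subgradient_le_slope[OF cvx bounded_linear.linear[OF F(1)] F(2) ray] .
  qed
  then have "\<phi> (x + t *\<^sub>R v) = \<phi> x" for t
    using constant_along_if_dense_subgradients_vanish[OF cont dense bounded_linear.linear[OF F(1)] F(2)]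
    by blast
  with nonconst show False by blast
qed

theorem mainTheorem7:
  fixes \<phi> :: "'a::banach \<Rightarrow> real" and a :: real
  assumes sep: "separable_space (euclidean :: 'a topology)"
    and cont: "continuous_on UNIV \<phi>"
    and cvx: "convex_on UNIV \<phi>"
    and lower: "\<And>x. \<phi> x \<ge> a"
    and nonconst: "\<not> (\<exists>x v. v \<noteq> 0 \<and> (\<exists>c. \<forall>t::real. \<phi> (x + t *\<^sub>R v) = c))"
  shows "\<exists>\<xi> :: 'a \<Rightarrow> real. bounded_linear \<xi> \<and>
           (\<forall>x v. v \<noteq> 0 \<longrightarrow>
              filterlim (\<lambda>t::real. \<phi> (x + t *\<^sub>R v) - \<xi> (x + t *\<^sub>R v)) at_top at_top)"
proof -
  obtain C :: "'a set" where C: "countable C" "closure C = UNIV"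
    using sep by (auto simp: separable_space_def)
  define e where "e = from_nat_into C"
  have "C \<noteq> {}" using C(2) by auto
  then have dense: "closure (range e) = UNIV" using C by (simp add: e_def range_from_nat_into)
  have "isCont \<phi> y" for y using cont by (simp add: continuous_on_eq_continuous_at)
  then have "\<forall>n. \<exists>f. bounded_linear f \<and> subgradient \<phi> (e n) f"
    using convex_on_bounded_subgradient[OF cvx] by blast
  then obtain F where "\<forall>n. bounded_linear (F n) \<and> subgradient \<phi> (e n) (F n)"
    by (auto dest!: choice)
  then have F: "\<And>n. bounded_linear (F n)" "\<And>n. subgradient \<phi> (e n) (F n)" by simp_all
  obtain w \<xi> where w: "\<And>n. w n > 0" "summable w" "suminf w < 1"
    and \<xi>: "bounded_linear \<xi>" "\<And>y. (\<lambda>n. w n * F n y) sums \<xi> y"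
    using bounded_linear_weighted_suminf[of F, OF F(1)] by blast
  have "filterlim (\<lambda>t. \<phi> (x + t *\<^sub>R v) - \<xi> (x + t *\<^sub>R v)) at_top at_top" if "v \<noteq> 0" for x v
  proof (rule coercive_along_line_of_dense_subgradients[OF cvx cont lower _ dense F w \<xi>])
    show "\<nexists>c. \<forall>t. \<phi> (x + t *\<^sub>R v) = c" using nonconst that by blast
  qed
  with \<xi>(1) show ?thesis by blast
qed

end
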